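(* Let $G=(V,E)$ be an undirected graph and let $\mathcal{F}$ be a $(\kappa,t)$-packing of $G$. Then the induced packing graph $H=G_{\mathcal{F}}$ satisfies $$\frac{|E(H)|}{|V(H)|}\le 2(t+1)^2\kappa^2\,\nabla_t(G)+\kappa.$$
   Context: A graph $K$ is $t$-shallow if there is a vertex $h$ such that every vertex of $K$ is joined to $h$ by a path in $K$ with at most $t$ edges. A $(\kappa,t)$-packing of $G$ is a multiset $\mathcal{F}$ of subsets $C\subseteq V$ such that each induced subgraph $G[C]$ is $t$-shallow and every vertex of $V$ lies in at most $\kappa$ members of $\mathcal{F}$ (counted with multiplicity). The induced packing graph $G_{\mathcal{F}}$ has vertex set $\mathcal{F}$, with $C,C'\in\mathcal{F}$ adjacent if $C\cap C'\neq\emptyset$ or there are $u\in C$, $v\in C'$ with $uv\in E$. A $t$-shallow minor of $G$ is a graph obtained by contracting edges and deleting edges and vertices such that each vertex of the minor corresponds to a cluster of vertices of $G$ inducing a $t$-shallow subgraph; $\nabla_t(G)$ is the supremum of $|E(K)|/|V(K)|$ over all $t$-shallow minors $K$ of $G$. *)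

theory Defs
  imports Complex_Main
begin

definition graph :: "'a set \<Rightarrow> 'a set set \<Rightarrow> bool" where
  "graph V E \<longleftrightarrow> finite V \<and>
     (\<forall>e\<in>E. \<exists>u v. e = {u, v} \<and> u \<noteq> v \<and> u \<in> V \<and> v \<in> V)"

definition induced_edges :: "'a set set \<Rightarrow> 'a set \<Rightarrow> 'a set set" where
  "induced_edges E C = {e \<in> E. e \<subseteq> C}"

definition is_walk :: "'a set \<Rightarrow> 'a set set \<Rightarrow> 'a list \<Rightarrow> bool" where
  "is_walk V E p \<longleftrightarrow> p \<noteq> [] \<and> set p \<subseteq> V \<and>
     (\<forall>i. Suc i < length p \<longrightarrow> {p ! i, p ! Suc i} \<in> E)"

text \<open>K = (V,E) is t-shallow: some vertex h reaches every vertex by a path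
  in K with at most t edges (i.e. at most t+1 vertices).\<close>
definition t_shallow :: "'a set \<Rightarrow> 'a set set \<Rightarrow> nat \<Rightarrow> bool" where
  "t_shallow V E t \<longleftrightarrow> (\<exists>h\<in>V. \<forall>v\<in>V. \<exists>p. is_walk V E p \<and> hd p = h \<and> last p = v
                                   \<and> length p \<le> t + 1)"

text \<open>A (kappa,t)-packing. The multiset F is represented as a list Fs
  (members counted with multiplicity, positions = copies).\<close>
definition packing :: "'a set \<Rightarrow> 'a set set \<Rightarrow> nat \<Rightarrow> nat \<Rightarrow> 'a set list \<Rightarrow> bool" where
  "packing V E \<kappa> t Fs \<longleftrightarrow>
     (\<forall>C\<in>set Fs. C \<subseteq> V \<and> t_shallow C (induced_edges E C) t) \<and>
     (\<forall>v\<in>V. length (filter (\<lambda>C. v \<in> C) Fs) \<le> \<kappa>)"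

text \<open>Induced packing graph: vertex set = the positions 0..<length Fs
  (the members of F with multiplicity), edges between distinct members.\<close>
definition packing_graph_vertices :: "'a set list \<Rightarrow> nat set" where
  "packing_graph_vertices Fs = {0..<length Fs}"

definition packing_graph_edges :: "'a set set \<Rightarrow> 'a set list \<Rightarrow> nat set set" where
  "packing_graph_edges E Fs =
     {{i, j} | i j. i < length Fs \<and> j < length Fs \<and> i \<noteq> j \<and>
        (Fs ! i \<inter> Fs ! j \<noteq> {} \<or> (\<exists>u\<in>Fs ! i. \<exists>v\<in>Fs ! j. {u, v} \<in> E))}"

text \<open>K = (VK,EK) is a t-shallow minor of G = (V,E): there are pairwise
  disjoint branch sets phi x (x in VK), each inducing a t-shallow subgraph of G,
  such that every edge xy of K is realised by an edge of G between phi x and phi y.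
  (Minor vertices are labelled by natural numbers, which loses nothing.)\<close>
definition shallow_minor :: "'a set \<Rightarrow> 'a set set \<Rightarrow> nat \<Rightarrow> nat set \<Rightarrow> nat set set \<Rightarrow> bool" where
  "shallow_minor V E t VK EK \<longleftrightarrow> graph VK EK \<and>
     (\<exists>\<phi> :: nat \<Rightarrow> 'a set.
        (\<forall>x\<in>VK. \<phi> x \<subseteq> V \<and> t_shallow (\<phi> x) (induced_edges E (\<phi> x)) t) \<and>
        (\<forall>x\<in>VK. \<forall>y\<in>VK. x \<noteq> y \<longrightarrow> \<phi> x \<inter> \<phi> y = {}) \<and>
        (\<forall>x\<in>VK. \<forall>y\<in>VK. {x, y} \<in> EK \<longrightarrow> (\<exists>u\<in>\<phi> x. \<exists>v\<in>\<phi> y. {u, v} \<in> E)))"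

text \<open>nabla_t(G) = sup of |E(K)|/|V(K)| over t-shallow minors K
  (the empty minor contributes 0/0 = 0 in HOL).\<close>
definition nabla :: "'a set \<Rightarrow> 'a set set \<Rightarrow> nat \<Rightarrow> real" where
  "nabla V E t = Sup {real (card EK) / real (card VK) | VK EK. shallow_minor V E t VK EK}"

end

theory Submission
  imports Defs "HOL-Combinatorics.Permutations"
begin

text \<open>Average over a uniformly random ordering \<pi> of the members of \<open>\<F>\<close>. Every member \<open>C\<^sub>i\<close>
  has a hub \<open>h\<^sub>i\<close> reaching all of \<open>C\<^sub>i\<close> by walks of length at most \<open>t\<close> inside \<open>C\<^sub>i\<close>.
  Let \<open>B\<^sub>\<pi>(i)\<close> consist of the vertices reached from \<open>h\<^sub>i\<close> by such a walk all of whose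
  vertices lie only in members of rank at most \<open>\<pi> i\<close>. A vertex of \<open>B\<^sub>\<pi>(i) \<inter> B\<^sub>\<pi>(j)\<close> lies in
  \<open>C\<^sub>i\<close> and \<open>C\<^sub>j\<close>, forcing \<open>\<pi> i = \<pi> j\<close>; so the \<open>B\<^sub>\<pi>(i)\<close> are branch sets of a \<open>t\<close>-shallow
  minor, which has at most \<open>\<nabla>\<^sub>t(G) |\<F>|\<close> edges.
  An edge \<open>ij\<close> of \<open>G\<^sub>\<F>\<close> with \<open>h\<^sub>j \<notin> C\<^sub>i\<close> is witnessed by an edge \<open>uv\<close> of \<open>G\<close> with hub walks
  \<open>P\<close> to \<open>u \<in> C\<^sub>i\<close> and \<open>Q\<close> to \<open>v\<close> in \<open>C\<^sub>j\<close>, \<open>Q\<close> avoiding \<open>C\<^sub>i\<close>. It survives in the minor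
  whenever \<open>i\<close> has maximal rank among the at most \<open>2(t+1)\<kappa>\<close> members meeting \<open>P\<close> or \<open>Q\<close>
  and \<open>j\<close> among the at most \<open>(t+1)\<kappa>\<close> members meeting \<open>Q\<close>, which happens with
  probability at least \<open>1/(2(t+1)\<^sup>2\<kappa>\<^sup>2)\<close>. The remaining edges, those with \<open>h\<^sub>j \<in> C\<^sub>i\<close>,
  number at most \<open>\<kappa> |\<F>|\<close>.\<close>

text \<open>Composing with a transposition of \<open>a\<close> and \<open>b\<close> moves the maximum from \<open>b\<close> to \<open>a\<close>, so the
  \<open>card U\<close> classes "maximal at \<open>b\<close>" partitioning \<open>X\<close> are equinumerous.\<close>
lemma card_argmax_mult:
  fixes X :: "(nat \<Rightarrow> nat) set"
  assumes "finite X" and "finite U" and "a \<in> U"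
    and inj: "\<And>\<pi>. \<pi> \<in> X \<Longrightarrow> inj_on \<pi> U"
    and closed: "\<And>\<pi> b. \<pi> \<in> X \<Longrightarrow> b \<in> U \<Longrightarrow> \<pi> \<circ> transpose a b \<in> X"
  shows "card {\<pi>\<in>X. \<forall>k\<in>U. \<pi> k \<le> \<pi> a} * card U = card X"
proof -
  define C where "C b = {\<pi>\<in>X. \<forall>k\<in>U. \<pi> k \<le> \<pi> b}" for b
  have cover: "X = (\<Union>b\<in>U. C b)"
  proof
    show "X \<subseteq> (\<Union>b\<in>U. C b)"
    proof
      fix \<pi> assume "\<pi> \<in> X"
      have "Max (\<pi> ` U) \<in> \<pi> ` U" using \<open>finite U\<close> \<open>a \<in> U\<close> by (intro Max_in) auto
      then obtain b where "b \<in> U" "\<pi> b = Max (\<pi> ` U)" by auto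
      then have "\<forall>k\<in>U. \<pi> k \<le> \<pi> b" using \<open>finite U\<close> by simp
      with \<open>\<pi> \<in> X\<close> \<open>b \<in> U\<close> show "\<pi> \<in> (\<Union>b\<in>U. C b)" by (auto simp: C_def)
    qed
  qed (auto simp: C_def)
  have disjoint: "C b \<inter> C c = {}" if "b \<in> U" "c \<in> U" "b \<noteq> c" for b c
  proof (rule ccontr)
    assume "C b \<inter> C c \<noteq> {}"
    then obtain \<pi> where "\<pi> \<in> X" "\<forall>k\<in>U. \<pi> k \<le> \<pi> b" "\<forall>k\<in>U. \<pi> k \<le> \<pi> c"
      by (auto simp: C_def)
    then have "\<pi> b = \<pi> c" using that by (meson antisym)
    then show False using that inj[OF \<open>\<pi> \<in> X\<close>] by (auto dest: inj_onD)
  qed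
  have same_card: "card (C b) = card (C a)" if "b \<in> U" for b
  proof -
    let ?\<tau> = "transpose a b"
    have "?\<tau> k \<in> U" if "k \<in> U" for k using that \<open>a \<in> U\<close> \<open>b \<in> U\<close> by (auto simp: transpose_def)
    then have "bij_betw (\<lambda>\<pi>. \<pi> \<circ> ?\<tau>) (C b) (C a)"
      using closed \<open>a \<in> U\<close> \<open>b \<in> U\<close>
      by (intro bij_betw_byWitness[where f' = "\<lambda>\<pi>. \<pi> \<circ> ?\<tau>"]) (auto simp: C_def comp_assoc)
    then show ?thesis by (rule bij_betw_same_card)
  qed
  have "card X = (\<Sum>b\<in>U. card (C b))"
    using cover card_UN_disjoint[of U C] \<open>finite U\<close> \<open>finite X\<close> disjoint by (simp add: C_def)
  also have "\<dots> = card U * card (C a)" using same_card by simp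
  finally show ?thesis by (simp add: C_def)
qed

text \<open>The second class is counted inside the first one: transpositions fixing \<open>i\<close> preserve
  the event that \<open>i\<close> is maximal on \<open>U\<close>.\<close>
lemma card_permutes_nested_argmax_mult:
  fixes m :: nat
  assumes "U \<subseteq> {..<m}" and "S \<subseteq> U" and "i \<in> U" and "i \<notin> S" and "j \<in> S"
  shows "card {\<pi>. \<pi> permutes {..<m} \<and> (\<forall>k\<in>U. \<pi> k \<le> \<pi> i) \<and> (\<forall>k\<in>S. \<pi> k \<le> \<pi> j)} * card U * card S
         = card {\<pi>. \<pi> permutes {..<m}}"
proof -
  define X where "X = {\<pi>. \<pi> permutes {..<m}}"
  define A where "A = {\<pi>\<in>X. \<forall>k\<in>U. \<pi> k \<le> \<pi> i}"
  have "finite X" unfolding X_def by (rule finite_permutations) simp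
  have "finite U" using assms(1) finite_subset by blast
  have "finite S" using assms(2) \<open>finite U\<close> finite_subset by blast
  have inj: "inj_on \<pi> T" if "\<pi> \<in> X" for \<pi> T
    using that unfolding X_def by (auto intro: inj_on_subset[OF permutes_inj])
  have closed: "\<pi> \<circ> transpose a b \<in> X" if "\<pi> \<in> X" "a \<in> U" "b \<in> U" for \<pi> a b
    using that assms(1) unfolding X_def by (auto intro!: permutes_compose permutes_swap_id)
  have card_A: "card A * card U = card X"
    unfolding A_def
    by (rule card_argmax_mult[OF \<open>finite X\<close> \<open>finite U\<close> \<open>i \<in> U\<close> inj]) (auto intro: closed \<open>i \<in> U\<close>)
  have "card {\<pi>\<in>A. \<forall>k\<in>S. \<pi> k \<le> \<pi> j} * card S = card A"
  proof (rule card_argmax_mult)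
    show "finite A" using \<open>finite X\<close> by (simp add: A_def)
    fix \<pi> b assume "\<pi> \<in> A" and "b \<in> S"
    let ?\<tau> = "transpose j b"
    have "\<pi> \<circ> ?\<tau> \<in> X" using \<open>\<pi> \<in> A\<close> \<open>b \<in> S\<close> assms(2,5) by (intro closed) (auto simp: A_def)
    moreover have "?\<tau> k \<in> U" if "k \<in> U" for k using that \<open>b \<in> S\<close> assms(2,5) by (auto simp: transpose_def)
    moreover have "?\<tau> i = i" using \<open>b \<in> S\<close> assms(4,5) by (auto simp: transpose_def)
    ultimately show "\<pi> \<circ> ?\<tau> \<in> A" using \<open>\<pi> \<in> A\<close> by (simp add: A_def)
  qed (use \<open>finite S\<close> assms(5) inj in \<open>auto simp: A_def\<close>)
  then have "card {\<pi>\<in>A. \<forall>k\<in>S. \<pi> k \<le> \<pi> j} * card S * card U = card X"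
    using card_A by simp
  then have "card {\<pi>\<in>A. \<forall>k\<in>S. \<pi> k \<le> \<pi> j} * card U * card S = card X"
    by (simp only: mult_ac)
  moreover have "{\<pi>\<in>A. \<forall>k\<in>S. \<pi> k \<le> \<pi> j}
      = {\<pi>. \<pi> permutes {..<m} \<and> (\<forall>k\<in>U. \<pi> k \<le> \<pi> i) \<and> (\<forall>k\<in>S. \<pi> k \<le> \<pi> j)}"
    by (auto simp: A_def X_def)
  ultimately show ?thesis by (simp add: X_def)
qed

lemma sum_card_filter_swap:
  fixes A :: "'a set" and X :: "'b set"
  assumes "finite A" and "finite X"
  shows "(\<Sum>a\<in>A. card {x\<in>X. P a x}) = (\<Sum>x\<in>X. card {a\<in>A. P a x})"
  using assms sum.swap[of "\<lambda>a x. if P a x then 1 else (0::nat)" X A]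
  by (simp add: sum.inter_filter[symmetric])

lemma is_walk_take:
  assumes "is_walk A F p" and "k < length p"
  shows "is_walk A F (take (Suc k) p)" and "hd (take (Suc k) p) = hd p"
    and "last (take (Suc k) p) = p ! k"
proof -
  show "is_walk A F (take (Suc k) p)"
    using assms set_take_subset[of "Suc k" p] unfolding is_walk_def by auto
  show "hd (take (Suc k) p) = hd p" using assms by (simp add: is_walk_def hd_take)
  show "last (take (Suc k) p) = p ! k" using assms(2) by (simp add: take_Suc_conv_app_nth)
qed

lemma is_walk_induced_mono:
  assumes "is_walk C (induced_edges E C) p" and "set p \<subseteq> B"
  shows "is_walk B (induced_edges E B) p"
proof -
  have "{p ! i, p ! Suc i} \<in> induced_edges E B" if "Suc i < length p" for i
  proof -
    have "p ! i \<in> set p" "p ! Suc i \<in> set p" using that by simp_all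
    then have "p ! i \<in> B" "p ! Suc i \<in> B" using assms(2) by blast+
    then show ?thesis using assms(1) that by (auto simp: is_walk_def induced_edges_def)
  qed
  then show ?thesis using assms by (auto simp: is_walk_def)
qed

text \<open>The first vertex of the walk lying in or next to \<open>S\<close> cannot lie in \<open>S\<close>: the first vertex
  does not, and otherwise its predecessor would already be next to \<open>S\<close>.\<close>
lemma is_walk_reaches_neighbour:
  assumes walk: "is_walk A F p" and "F \<subseteq> E" and "hd p \<notin> S"
    and "last p \<in> S \<or> (\<exists>u\<in>S. {u, last p} \<in> E)"
  shows "\<exists>k<length p. set (take (Suc k) p) \<inter> S = {} \<and> (\<exists>u\<in>S. {u, p ! k} \<in> E)"
proof -
  define N where "N y \<longleftrightarrow> y \<in> S \<or> (\<exists>u\<in>S. {u, y} \<in> E)" for y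
  have "p \<noteq> []" using walk by (simp add: is_walk_def)
  then have ex: "\<exists>k. k < length p \<and> N (p ! k)"
    using assms(4) by (intro exI[of _ "length p - 1"]) (auto simp: N_def last_conv_nth)
  define k where "k = (LEAST k. k < length p \<and> N (p ! k))"
  have k: "k < length p" "N (p ! k)" using LeastI_ex[OF ex] unfolding k_def by auto
  have before: "\<not> N (p ! l)" if "l < k" for l
    using not_less_Least[of l "\<lambda>k. k < length p \<and> N (p ! k)"] that k(1) unfolding k_def by auto
  have "p ! k \<notin> S"
  proof (cases k)
    case 0
    then show ?thesis using \<open>hd p \<notin> S\<close> \<open>p \<noteq> []\<close> by (simp add: hd_conv_nth)
  next
    case (Suc l)
    have "{p ! l, p ! k} \<in> E" using walk k(1) Suc \<open>F \<subseteq> E\<close> by (auto simp: is_walk_def)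
    then have "{p ! k, p ! l} \<in> E" by (simp add: insert_commute)
    then show ?thesis using before[of l] Suc unfolding N_def by blast
  qed
  then have "p ! l \<notin> S" if "l \<le> k" for l
    using that before by (cases "l = k") (auto simp: N_def)
  then have "set (take (Suc k) p) \<inter> S = {}"
    using k(1) by (auto simp: in_set_conv_nth)
  with k \<open>p ! k \<notin> S\<close> show ?thesis by (auto simp: N_def)
qed

lemma shallow_minor_card_vertices_le:
  assumes "finite V" and "shallow_minor V E t VK EK"
  shows "card VK \<le> card V"
proof -
  obtain \<phi> :: "nat \<Rightarrow> _" where sub: "\<forall>x\<in>VK. \<phi> x \<subseteq> V \<and> t_shallow (\<phi> x) (induced_edges E (\<phi> x)) t"
    and disjoint: "\<forall>x\<in>VK. \<forall>y\<in>VK. x \<noteq> y \<longrightarrow> \<phi> x \<inter> \<phi> y = {}"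
    using assms(2) unfolding shallow_minor_def by blast
  have "\<phi> x \<noteq> {}" if "x \<in> VK" for x using sub that by (auto simp: t_shallow_def)
  then have some_in: "(SOME u. u \<in> \<phi> x) \<in> \<phi> x" if "x \<in> VK" for x
    using that by (simp add: some_in_eq)
  have "inj_on (\<lambda>x. SOME u. u \<in> \<phi> x) VK"
  proof (rule inj_onI, rule ccontr)
    fix x y assume "x \<in> VK" "y \<in> VK" "(SOME u. u \<in> \<phi> x) = (SOME u. u \<in> \<phi> y)" "x \<noteq> y"
    then show False using some_in[of x] some_in[of y] disjoint by auto
  qed
  moreover have "(\<lambda>x. SOME u. u \<in> \<phi> x) ` VK \<subseteq> V" using some_in sub by blast
  ultimately show ?thesis using assms(1) by (rule card_inj_on_le)
qed

lemma bdd_above_shallow_minor_densities: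
  assumes "finite V"
  shows "bdd_above {real (card EK) / real (card VK) | VK EK. shallow_minor V E t VK EK}"
proof (rule bdd_aboveI)
  fix r assume "r \<in> {real (card EK) / real (card VK) | VK EK. shallow_minor V E t VK EK}"
  then obtain VK EK where r: "r = real (card EK) / real (card VK)" and minor: "shallow_minor V E t VK EK"
    by blast
  then have "graph VK EK" by (simp add: shallow_minor_def)
  then have "EK \<subseteq> Pow VK" and "finite VK" by (auto simp: graph_def)
  then have "card EK \<le> card (Pow VK)" by (intro card_mono) auto
  also have "\<dots> = 2 ^ card VK" using \<open>finite VK\<close> by (rule card_Pow)
  also have "\<dots> \<le> 2 ^ card V"
    using shallow_minor_card_vertices_le[OF assms minor] by (simp add: power_increasing)
  finally have "real (card EK) \<le> 2 ^ card V" by (simp flip: of_nat_le_iff)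
  moreover have "r \<le> real (card EK)"
    unfolding r by (cases "card VK = 0") (simp_all add: divide_le_eq mult_le_cancel_left1)
  ultimately show "r \<le> 2 ^ card V" by linarith
qed

lemma nabla_nonneg:
  assumes "finite V"
  shows "0 \<le> nabla V E t"
proof -
  have "shallow_minor V E t {} {}" by (simp add: shallow_minor_def graph_def)
  then have "0 \<in> {real (card EK) / real (card VK) | VK EK. shallow_minor V E t VK EK}" by force
  from cSup_upper2[OF this order_refl bdd_above_shallow_minor_densities[OF assms]]
  show ?thesis unfolding nabla_def .
qed

lemma shallow_minor_card_edges_le:
  assumes "finite V" and "shallow_minor V E t VK EK"
  shows "real (card EK) \<le> nabla V E t * real (card VK)"
proof (cases "VK = {}")
  case True
  then have "EK = {}" using assms(2) by (auto simp: shallow_minor_def graph_def)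
  with True show ?thesis by simp
next
  case False
  then have "card VK > 0" using assms(2) by (simp add: shallow_minor_def graph_def card_gt_0_iff)
  have "real (card EK) / real (card VK) \<le> nabla V E t"
    unfolding nabla_def using bdd_above_shallow_minor_densities[OF assms(1)] assms(2)
    by (intro cSup_upper) blast+
  with \<open>card VK > 0\<close> show ?thesis by (simp add: divide_le_eq)
qed

locale shallow_packing =
  fixes V :: "'a set" and E :: "'a set set" and \<kappa> t :: nat and Fs :: "'a set list"
  assumes packing: "packing V E \<kappa> t Fs"
begin

definition hub :: "nat \<Rightarrow> 'a" where
  "hub i = (SOME h. h \<in> Fs!i \<and> (\<forall>v\<in>Fs!i. \<exists>p. is_walk (Fs!i) (induced_edges E (Fs!i)) p
      \<and> hd p = h \<and> last p = v \<and> length p \<le> t + 1))"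

definition hub_walk :: "nat \<Rightarrow> 'a list \<Rightarrow> 'a \<Rightarrow> bool" where
  "hub_walk i p w \<longleftrightarrow>
     is_walk (Fs!i) (induced_edges E (Fs!i)) p \<and> hd p = hub i \<and> last p = w \<and> length p \<le> t + 1"

definition members_at :: "'a \<Rightarrow> nat set" where
  "members_at w = {i. i < length Fs \<and> w \<in> Fs!i}"

definition branch :: "(nat \<Rightarrow> nat) \<Rightarrow> nat \<Rightarrow> 'a set" where
  "branch \<pi> i = {w. \<exists>p. hub_walk i p w \<and> (\<forall>k\<in>\<Union>(members_at ` set p). \<pi> k \<le> \<pi> i)}"

definition minor_vertices :: "(nat \<Rightarrow> nat) \<Rightarrow> nat set" where
  "minor_vertices \<pi> = {i. i < length Fs \<and> branch \<pi> i \<noteq> {}}"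

definition minor_edges :: "(nat \<Rightarrow> nat) \<Rightarrow> nat set set" where
  "minor_edges \<pi> = {{i, j} | i j. i < length Fs \<and> j < length Fs \<and> i \<noteq> j \<and>
      (\<exists>u\<in>branch \<pi> i. \<exists>v\<in>branch \<pi> j. {u, v} \<in> E)}"

definition hub_edges :: "nat set set" where
  "hub_edges = {{i, j} | i j. i < length Fs \<and> j < length Fs \<and> i \<noteq> j \<and> hub j \<in> Fs!i}"

text \<open>A random ordering of the members is a uniformly random permutation \<open>\<pi>\<close> of their
  indices, member \<open>k\<close> having rank \<open>\<pi> k\<close>.\<close>
abbreviation orderings :: "(nat \<Rightarrow> nat) set" where
  "orderings \<equiv> {\<pi>. \<pi> permutes {..<length Fs}}"

lemma member_subset: "i < length Fs \<Longrightarrow> Fs!i \<subseteq> V"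
  using packing by (auto simp: packing_def)

lemma
  assumes "i < length Fs"
  shows hub_in_member: "hub i \<in> Fs!i"
    and hub_walk_exists: "v \<in> Fs!i \<Longrightarrow> \<exists>p. hub_walk i p v"
proof -
  have "t_shallow (Fs!i) (induced_edges E (Fs!i)) t" using packing assms by (auto simp: packing_def)
  then have "\<exists>h. h \<in> Fs!i \<and> (\<forall>v\<in>Fs!i. \<exists>p. is_walk (Fs!i) (induced_edges E (Fs!i)) p
      \<and> hd p = h \<and> last p = v \<and> length p \<le> t + 1)"
    by (auto simp: t_shallow_def)
  then have "hub i \<in> Fs!i \<and> (\<forall>v\<in>Fs!i. \<exists>p. hub_walk i p v)"
    unfolding hub_def hub_walk_def by (rule someI_ex)
  then show "hub i \<in> Fs!i" and "v \<in> Fs!i \<Longrightarrow> \<exists>p. hub_walk i p v" by blast+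
qed

lemma hub_walk_set: "hub_walk i p w \<Longrightarrow> set p \<subseteq> Fs!i"
  by (simp add: hub_walk_def is_walk_def)

lemma hub_walk_last_in: "hub_walk i p w \<Longrightarrow> w \<in> set p"
  by (auto simp: hub_walk_def is_walk_def)

lemma hub_walk_take: "hub_walk i p w \<Longrightarrow> k < length p \<Longrightarrow> hub_walk i (take (Suc k) p) (p ! k)"
  using is_walk_take[of "Fs!i" _ p k] by (auto simp: hub_walk_def)

lemma card_members_at_le: "w \<in> V \<Longrightarrow> card (members_at w) \<le> \<kappa>"
  using packing by (auto simp: packing_def members_at_def length_filter_conv_card)

lemma card_members_along_hub_walk_le:
  assumes "hub_walk i p w" and "i < length Fs"
  shows "card (\<Union>(members_at ` set p)) \<le> (t + 1) * \<kappa>"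
proof -
  have "set p \<subseteq> V" using assms hub_walk_set member_subset by blast
  have "card (\<Union>(members_at ` set p)) \<le> (\<Sum>w\<in>set p. card (members_at w))" by (rule card_UN_le) simp
  also have "\<dots> \<le> card (set p) * \<kappa>"
    using sum_mono[of "set p" "\<lambda>w. card (members_at w)" "\<lambda>_. \<kappa>"] \<open>set p \<subseteq> V\<close> card_members_at_le
    by auto
  also have "\<dots> \<le> (t + 1) * \<kappa>"
    using card_length[of p] assms(1) by (intro mult_le_mono1) (auto simp: hub_walk_def)
  finally show ?thesis .
qed

lemma branch_subset: "branch \<pi> i \<subseteq> Fs!i"
proof
  fix w assume "w \<in> branch \<pi> i"
  then obtain p where "hub_walk i p w" by (auto simp: branch_def)
  then show "w \<in> Fs!i" using hub_walk_set hub_walk_last_in by blast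
qed

lemma branch_disjoint:
  assumes "inj_on \<pi> {..<length Fs}" and "i < length Fs" "j < length Fs" "i \<noteq> j"
  shows "branch \<pi> i \<inter> branch \<pi> j = {}"
proof (rule ccontr)
  assume "branch \<pi> i \<inter> branch \<pi> j \<noteq> {}"
  then obtain w p q where w: "w \<in> branch \<pi> i" "w \<in> branch \<pi> j"
    and p: "hub_walk i p w" "\<forall>k\<in>\<Union>(members_at ` set p). \<pi> k \<le> \<pi> i"
    and q: "hub_walk j q w" "\<forall>k\<in>\<Union>(members_at ` set q). \<pi> k \<le> \<pi> j"
    by (auto simp: branch_def)
  have "i \<in> members_at w" "j \<in> members_at w"
    using w branch_subset assms(2,3) by (auto simp: members_at_def)
  then have "\<pi> i = \<pi> j" using p q hub_walk_last_in by (meson UN_I antisym)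
  then show False using assms by (auto dest: inj_onD)
qed

lemma branch_t_shallow:
  assumes "branch \<pi> i \<noteq> {}"
  shows "t_shallow (branch \<pi> i) (induced_edges E (branch \<pi> i)) t"
proof -
  have walk_in_branch: "set p \<subseteq> branch \<pi> i"
    if p: "hub_walk i p w" "\<forall>k\<in>\<Union>(members_at ` set p). \<pi> k \<le> \<pi> i" for p w
  proof
    fix x assume "x \<in> set p"
    then obtain k where k: "k < length p" "x = p ! k" by (auto simp: in_set_conv_nth)
    have "hub_walk i (take (Suc k) p) x" using hub_walk_take[OF p(1) k(1)] k(2) by simp
    moreover have "set (take (Suc k) p) \<subseteq> set p" by (rule set_take_subset)
    ultimately show "x \<in> branch \<pi> i" using p(2) unfolding branch_def by blast
  qed
  obtain w p where p: "hub_walk i p w" "\<forall>k\<in>\<Union>(members_at ` set p). \<pi> k \<le> \<pi> i"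
    using assms by (auto simp: branch_def)
  have "hub i \<in> set p" using p(1) unfolding hub_walk_def is_walk_def by (metis hd_in_set)
  then have "hub i \<in> branch \<pi> i" using walk_in_branch[OF p] by blast
  moreover have "\<exists>p. is_walk (branch \<pi> i) (induced_edges E (branch \<pi> i)) p
      \<and> hd p = hub i \<and> last p = v \<and> length p \<le> t + 1" if "v \<in> branch \<pi> i" for v
  proof -
    obtain p where p: "hub_walk i p v" "\<forall>k\<in>\<Union>(members_at ` set p). \<pi> k \<le> \<pi> i"
      using \<open>v \<in> branch \<pi> i\<close> by (auto simp: branch_def)
    then have "is_walk (branch \<pi> i) (induced_edges E (branch \<pi> i)) p"
      using is_walk_induced_mono walk_in_branch[OF p] p(1) unfolding hub_walk_def by blast
    with p(1) show ?thesis unfolding hub_walk_def by blast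
  qed
  ultimately show ?thesis unfolding t_shallow_def by blast
qed

lemma shallow_minor_branches:
  assumes "\<pi> permutes {..<length Fs}"
  shows "shallow_minor V E t (minor_vertices \<pi>) (minor_edges \<pi>)"
  unfolding shallow_minor_def
proof (intro conjI exI[where x = "branch \<pi>"] ballI impI)
  show "graph (minor_vertices \<pi>) (minor_edges \<pi>)"
    unfolding graph_def minor_vertices_def minor_edges_def by (intro conjI) (simp, blast)
next
  fix x assume "x \<in> minor_vertices \<pi>"
  then show "branch \<pi> x \<subseteq> V"
    using branch_subset[of \<pi> x] member_subset[of x] by (simp add: minor_vertices_def)
  show "t_shallow (branch \<pi> x) (induced_edges E (branch \<pi> x)) t"
    using branch_t_shallow \<open>x \<in> minor_vertices \<pi>\<close> by (simp add: minor_vertices_def)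
next
  fix x y assume "x \<in> minor_vertices \<pi>" "y \<in> minor_vertices \<pi>" "x \<noteq> y"
  moreover have "inj_on \<pi> {..<length Fs}"
    using assms by (auto intro: inj_on_subset[OF permutes_inj])
  ultimately show "branch \<pi> x \<inter> branch \<pi> y = {}"
    by (intro branch_disjoint) (simp_all add: minor_vertices_def)
next
  fix x y assume "{x, y} \<in> minor_edges \<pi>"
  then obtain i j where ij: "{x, y} = {i, j}" "\<exists>u\<in>branch \<pi> i. \<exists>v\<in>branch \<pi> j. {u, v} \<in> E"
    unfolding minor_edges_def by blast
  have "x = i \<and> y = j \<or> x = j \<and> y = i" using ij(1) by (simp only: doubleton_eq_iff)
  with ij(2) show "\<exists>u\<in>branch \<pi> x. \<exists>v\<in>branch \<pi> y. {u, v} \<in> E"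
    by (metis insert_commute)
qed

lemma card_minor_edges_le:
  assumes "finite V" and "\<pi> permutes {..<length Fs}"
  shows "real (card (minor_edges \<pi>)) \<le> nabla V E t * real (length Fs)"
proof -
  have "card (minor_vertices \<pi>) \<le> length Fs"
    using card_mono[of "{..<length Fs}" "minor_vertices \<pi>"] by (auto simp: minor_vertices_def)
  then show ?thesis
    using shallow_minor_card_edges_le[OF assms(1) shallow_minor_branches[OF assms(2)]]
      nabla_nonneg[OF assms(1)]
    by (meson mult_left_mono of_nat_le_iff order_trans)
qed

lemma finite_hub_edges: "finite hub_edges"
  by (rule finite_subset[of _ "Pow {..<length Fs}"]) (auto simp: hub_edges_def)

lemma card_hub_edges_le: "card hub_edges \<le> length Fs * \<kappa>"
proof -
  let ?pairs = "SIGMA j:{..<length Fs}. members_at (hub j)"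
  have "finite ?pairs" by (simp add: members_at_def)
  have "hub_edges \<subseteq> (\<lambda>(j, i). {i, j}) ` ?pairs"
  proof
    fix e assume "e \<in> hub_edges"
    then obtain i j where "e = {i, j}" "(j, i) \<in> ?pairs" by (auto simp: hub_edges_def members_at_def)
    then show "e \<in> (\<lambda>(j, i). {i, j}) ` ?pairs" by force
  qed
  then have "card hub_edges \<le> card ((\<lambda>(j, i). {i, j}) ` ?pairs)"
    using \<open>finite ?pairs\<close> by (intro card_mono) auto
  also have "\<dots> \<le> card ?pairs" using \<open>finite ?pairs\<close> by (rule card_image_le)
  also have "\<dots> = (\<Sum>j<length Fs. card (members_at (hub j)))" by (simp add: members_at_def)
  also have "\<dots> \<le> (\<Sum>j<length Fs. \<kappa>)"
    using hub_in_member member_subset card_members_at_le by (intro sum_mono) blast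
  finally show ?thesis by simp
qed

lemma exists_escaping_hub_walk:
  assumes "i < length Fs" "j < length Fs" and "hub j \<notin> Fs!i"
    and "Fs!i \<inter> Fs!j \<noteq> {} \<or> (\<exists>u\<in>Fs!i. \<exists>v\<in>Fs!j. {u, v} \<in> E)"
  shows "\<exists>u v q. u \<in> Fs!i \<and> {u, v} \<in> E \<and> hub_walk j q v \<and> set q \<inter> Fs!i = {}"
proof -
  obtain x where "x \<in> Fs!j" "x \<in> Fs!i \<or> (\<exists>u\<in>Fs!i. {u, x} \<in> E)" using assms(4) by blast
  moreover obtain q where q: "hub_walk j q x" using hub_walk_exists[OF assms(2)] \<open>x \<in> Fs!j\<close> by blast
  ultimately obtain k where "k < length q" "set (take (Suc k) q) \<inter> Fs!i = {}"
    and "\<exists>u\<in>Fs!i. {u, q ! k} \<in> E"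
    using is_walk_reaches_neighbour[of "Fs!j" "induced_edges E (Fs!j)" q E "Fs!i"] assms(3)
    by (auto simp: hub_walk_def induced_edges_def)
  with hub_walk_take[OF q] show ?thesis by blast
qed

lemma card_orderings_le_edge_survives:
  assumes "i < length Fs" "j < length Fs" and "hub j \<notin> Fs!i"
    and "Fs!i \<inter> Fs!j \<noteq> {} \<or> (\<exists>u\<in>Fs!i. \<exists>v\<in>Fs!j. {u, v} \<in> E)"
  shows "card orderings \<le> card {\<pi>\<in>orderings. {i, j} \<in> minor_edges \<pi>} * (2 * (t + 1) * \<kappa> * ((t + 1) * \<kappa>))"
proof -
  obtain u v q where "u \<in> Fs!i" "{u, v} \<in> E" and q: "hub_walk j q v" and "set q \<inter> Fs!i = {}"
    using exists_escaping_hub_walk[OF assms] by blast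
  obtain p where p: "hub_walk i p u" using hub_walk_exists[OF assms(1) \<open>u \<in> Fs!i\<close>] by blast
  define S where "S = \<Union>(members_at ` set q)"
  define U where "U = \<Union>(members_at ` set p) \<union> S"
  have "i \<in> U" using hub_walk_last_in[OF p] \<open>u \<in> Fs!i\<close> assms(1) by (auto simp: U_def members_at_def)
  have "j \<in> S" using hub_walk_last_in[OF q] hub_walk_set[OF q] assms(2) by (auto simp: S_def members_at_def)
  have "i \<notin> S" using \<open>set q \<inter> Fs!i = {}\<close> by (auto simp: S_def members_at_def)
  have "U \<subseteq> {..<length Fs}" by (auto simp: U_def S_def members_at_def)
  define event where "event = {\<pi>. \<pi> permutes {..<length Fs} \<and> (\<forall>k\<in>U. \<pi> k \<le> \<pi> i) \<and> (\<forall>k\<in>S. \<pi> k \<le> \<pi> j)}"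
  have card_event: "card event * card U * card S = card orderings"
    unfolding event_def using \<open>U \<subseteq> _\<close> \<open>i \<in> U\<close> \<open>i \<notin> S\<close> \<open>j \<in> S\<close>
    by (intro card_permutes_nested_argmax_mult) (auto simp: U_def)
  have "i \<noteq> j" using \<open>i \<notin> S\<close> \<open>j \<in> S\<close> by blast
  have "{i, j} \<in> minor_edges \<pi>" if "\<pi> \<in> event" for \<pi>
  proof -
    have "u \<in> branch \<pi> i" "v \<in> branch \<pi> j"
      using that p q by (auto simp: event_def branch_def U_def S_def)
    then show ?thesis
      unfolding minor_edges_def using assms(1,2) \<open>i \<noteq> j\<close> \<open>{u, v} \<in> E\<close> by blast
  qed
  then have "event \<subseteq> {\<pi>\<in>orderings. {i, j} \<in> minor_edges \<pi>}" by (auto simp: event_def)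
  then have card_survives: "card event \<le> card {\<pi>\<in>orderings. {i, j} \<in> minor_edges \<pi>}"
    by (intro card_mono) (simp_all add: finite_permutations)
  have "card S \<le> (t + 1) * \<kappa>"
    unfolding S_def using q assms(2) by (rule card_members_along_hub_walk_le)
  moreover have "card U \<le> 2 * (t + 1) * \<kappa>"
    using card_Un_le[of "\<Union>(members_at ` set p)" S] \<open>card S \<le> _\<close>
      card_members_along_hub_walk_le[OF p assms(1)]
    by (simp add: U_def)
  ultimately have "card event * card U * card S
      \<le> card {\<pi>\<in>orderings. {i, j} \<in> minor_edges \<pi>} * (2 * (t + 1) * \<kappa>) * ((t + 1) * \<kappa>)"
    using card_survives by (intro mult_le_mono) simp_all
  then show ?thesis using card_event by (simp add: mult.assoc)
qed

lemma card_non_hub_edges_mult_le: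
  "card (packing_graph_edges E Fs - hub_edges) * card orderings
     \<le> 2 * (t + 1) * \<kappa> * ((t + 1) * \<kappa>) * (\<Sum>\<pi>\<in>orderings. card (minor_edges \<pi>))"
proof -
  let ?D = "packing_graph_edges E Fs - hub_edges" and ?K = "2 * (t + 1) * \<kappa> * ((t + 1) * \<kappa>)"
  have "finite ?D" by (rule finite_subset[of _ "Pow {..<length Fs}"]) (auto simp: packing_graph_edges_def)
  have "finite orderings" by (simp add: finite_permutations)
  have survives: "card orderings \<le> card {\<pi>\<in>orderings. e \<in> minor_edges \<pi>} * ?K" if e: "e \<in> ?D" for e
  proof -
    obtain i j where ij: "e = {i, j}" "i < length Fs" "j < length Fs" "i \<noteq> j"
      "Fs!i \<inter> Fs!j \<noteq> {} \<or> (\<exists>u\<in>Fs!i. \<exists>v\<in>Fs!j. {u, v} \<in> E)"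
      using e unfolding packing_graph_edges_def by blast
    moreover have "hub j \<notin> Fs!i" using e ij unfolding hub_edges_def by blast
    ultimately show ?thesis using card_orderings_le_edge_survives by simp
  qed
  have "card ?D * card orderings = (\<Sum>e\<in>?D. card orderings)" by simp
  also have "\<dots> \<le> (\<Sum>e\<in>?D. card {\<pi>\<in>orderings. e \<in> minor_edges \<pi>} * ?K)"
    by (rule sum_mono) (rule survives)
  also have "\<dots> = ?K * (\<Sum>e\<in>?D. card {\<pi>\<in>orderings. e \<in> minor_edges \<pi>})"
    by (simp add: sum_distrib_left mult.commute)
  also have "\<dots> = ?K * (\<Sum>\<pi>\<in>orderings. card {e\<in>?D. e \<in> minor_edges \<pi>})"
    by (simp only: sum_card_filter_swap[OF \<open>finite ?D\<close> \<open>finite orderings\<close>])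
  also have "\<dots> \<le> ?K * (\<Sum>\<pi>\<in>orderings. card (minor_edges \<pi>))"
    by (intro mult_left_mono sum_mono card_mono)
      (auto intro: finite_subset[of _ "Pow {..<length Fs}"] simp: minor_edges_def)
  finally show ?thesis .
qed

lemma card_packing_graph_edges_le:
  assumes "finite V"
  shows "real (card (packing_graph_edges E Fs))
    \<le> (2 * (real t + 1)^2 * (real \<kappa>)^2 * nabla V E t + real \<kappa>) * real (length Fs)"
proof -
  let ?D = "packing_graph_edges E Fs - hub_edges" and ?K = "2 * (real t + 1)^2 * (real \<kappa>)^2"
  have "finite orderings" by (simp add: finite_permutations)
  moreover have "id \<in> orderings" by (simp add: permutes_id)
  ultimately have "card orderings > 0" using card_gt_0_iff by blast
  have "real (card ?D) * card orderings \<le> ?K * (\<Sum>\<pi>\<in>orderings. real (card (minor_edges \<pi>)))"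
    using card_non_hub_edges_mult_le unfolding of_nat_le_iff[symmetric, where 'a = real]
    by (simp add: power2_eq_square algebra_simps)
  also have "\<dots> \<le> ?K * (\<Sum>\<pi>\<in>orderings. nabla V E t * real (length Fs))"
    using card_minor_edges_le[OF assms] by (intro mult_left_mono sum_mono) auto
  finally have "real (card ?D) \<le> ?K * nabla V E t * real (length Fs)"
    using \<open>card orderings > 0\<close> by (simp add: mult_le_cancel_right mult.assoc)
  moreover have "card (packing_graph_edges E Fs) \<le> card ?D + card hub_edges"
    using diff_card_le_card_Diff[OF finite_hub_edges, of "packing_graph_edges E Fs"] by linarith
  ultimately show ?thesis
    using card_hub_edges_le unfolding of_nat_le_iff[symmetric, where 'a = real]
    by (simp add: algebra_simps)
qed

end

theorem mainTheorem6:
  fixes V :: "'a set" and E :: "'a set set" and \<kappa> t :: nat and Fs :: "'a set list"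
  assumes "graph V E"
    and "packing V E \<kappa> t Fs"
  shows "real (card (packing_graph_edges E Fs)) / real (card (packing_graph_vertices Fs))
           \<le> 2 * (real t + 1)^2 * (real \<kappa>)^2 * nabla V E t + real \<kappa>"
proof -
  interpret shallow_packing V E \<kappa> t Fs by unfold_locales (fact assms(2))
  have "finite V" using assms(1) by (simp add: graph_def)
  show ?thesis
  proof (cases "Fs = []")
    case True
    then show ?thesis using nabla_nonneg[OF \<open>finite V\<close>] by (simp add: packing_graph_vertices_def)
  next
    case False
    then show ?thesis using card_packing_graph_edges_le[OF \<open>finite V\<close>]
      by (simp add: packing_graph_vertices_def pos_divide_le_eq)
  qed
qed

end
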